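(* There exists a constant $c>0$ not depending on $n$ such that $\theta_n(B_n)>c\sqrt n$ for all $n\in\mathbb{N}$. In particular this holds with $$c=\frac{\sqrt[3]{\pi}}{\sqrt{12e}\cdot\sqrt[6]{3}}=0.2135\ldots$$
   Context: $B_n=\{x\in\mathbb{R}^n:\|x\|\le1\}$ (Euclidean norm). $C(B_n)$ is the space of continuous real functions on $B_n$ with the max norm; $\Pi_1(\mathbb{R}^n)$ is the set of polynomials in $n$ variables of degree at most $1$. For a nondegenerate simplex $S\subset B_n$ with vertices $x^{(1)},\dots,x^{(n+1)}$, the corresponding interpolation projector $P:C(B_n)\to\Pi_1(\mathbb{R}^n)$ is defined by $Pf(x^{(j)})=f(x^{(j)})$, and $\|P\|_{B_n}$ is its operator norm on $C(B_n)$ (equivalently $\max_{x\in B_n}\sum_j|\lambda_j(x)|$ with $\lambda_j(x)$ the barycentric coordinates of $x$ with respect to $S$). $\theta_n(B_n)$ is the minimal value of $\|P\|_{B_n}$ over all nondegenerate simplices with vertices in $B_n$. *)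

theory Defs
  imports "HOL-Analysis.Analysis"
begin

text \<open>Points of R^n are vectors of type real^'n, with n = CARD('n).
  The unit ball B_n is cball 0 1. A simplex is given by its vertices
  v 0, ..., v n (n = CARD('n)).\<close>

definition Pi1 :: "(real^'n \<Rightarrow> real) set" where
  "Pi1 = {p. \<exists>a b. \<forall>x. p x = a \<bullet> x + b}"

definition nondeg_simplex :: "(nat \<Rightarrow> real^'n) \<Rightarrow> bool" where
  "nondeg_simplex v \<longleftrightarrow> inj_on v {0..CARD('n)} \<and>
     \<not> affine_dependent (v ` {0..CARD('n)})"

definition interp_proj :: "(nat \<Rightarrow> real^'n) \<Rightarrow> (real^'n \<Rightarrow> real) \<Rightarrow> (real^'n \<Rightarrow> real)" where
  "interp_proj v f = (THE p. p \<in> Pi1 \<and> (\<forall>j\<le>CARD('n). p (v j) = f (v j)))"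

definition proj_norm :: "(nat \<Rightarrow> real^'n) \<Rightarrow> real" where
  "proj_norm v = Sup {\<bar>interp_proj v f x\<bar> | f x.
      continuous_on (cball 0 1) f \<and> (\<forall>y\<in>cball 0 1. \<bar>f y\<bar> \<le> 1) \<and> x \<in> cball (0::real^'n) 1}"

definition theta :: "('n::finite) itself \<Rightarrow> real" where
  "theta _ = Inf {proj_norm v | v :: nat \<Rightarrow> real^('n::finite).
      nondeg_simplex v \<and> (\<forall>j\<le>CARD('n). v j \<in> cball 0 1)}"

end

theory Submission
  imports Defs
begin

(* Write lambda_j(x) = a_j . x + b_j for the barycentric coordinates of a nondegenerate simplex
  with vertices in the unit ball. Each lambda_j falls from 1 to 0 between two vertices at
  distance at most 2, so |a_j| >= 1/2. Choosing the signs s_j = +-1 one at a time so that no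
  cross term is negative gives |sum_j s_j a_j|^2 >= sum_j |a_j|^2 >= (n+1)/4. The interpolant
  of a continuous f with |f| <= 1 and f(v_j) = s_j is sum_j s_j lambda_j, an affine function
  whose gradient has norm at least sqrt(n+1)/2, and an affine function reaches the norm of
  its gradient in absolute value on the unit ball. Hence theta_n(B_n) >= sqrt(n+1)/2, which
  exceeds c sqrt n because c < 1/2. *)

lemma nondeg_simplex_affine_hull:
  fixes v :: "nat \<Rightarrow> real^'n"
  assumes "nondeg_simplex v"
  shows "affine hull (v ` {0..CARD('n)}) = UNIV"
proof (rule affine_independent_span_eq)
  show "\<not> affine_dependent (v ` {0..CARD('n)})"
    using assms unfolding nondeg_simplex_def by blast
  show "card (v ` {0..CARD('n)}) = Suc DIM(real^'n)"
    using assms unfolding nondeg_simplex_def by (simp add: card_image)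
qed

lemma affine_eq_0_on_nondeg_simplex:
  fixes v :: "nat \<Rightarrow> real^'n"
  assumes "nondeg_simplex v" and "\<forall>k\<le>CARD('n). a \<bullet> v k + b = 0"
  shows "a = 0" and "b = 0"
proof -
  have "v ` {0..CARD('n)} \<subseteq> {x. a \<bullet> x = - b}"
    using assms(2) by (auto simp: eq_neg_iff_add_eq_0)
  then have "affine hull (v ` {0..CARD('n)}) \<subseteq> {x. a \<bullet> x = - b}"
    by (intro hull_minimal affine_hyperplane)
  then have hyperplane: "a \<bullet> x = - b" for x
    using nondeg_simplex_affine_hull[OF assms(1)] by blast
  show "b = 0" using hyperplane[of 0] by simp
  show "a = 0" using hyperplane[of a] \<open>b = 0\<close> by simp
qed

lemma affine_interpolation_on_nondeg_simplex:
  fixes v :: "nat \<Rightarrow> real^'n"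
  assumes "nondeg_simplex v"
  shows "\<exists>a b. \<forall>k\<le>CARD('n). a \<bullet> v k + b = t k"
proof -
  let ?N = "CARD('n)"
  define d where "d k = v k - v 0" for k
  have inj_v: "inj_on v {0..?N}" and indep: "\<not> affine_dependent (v ` {0..?N})"
    using assms unfolding nondeg_simplex_def by auto
  have "{0..?N} = insert 0 {1..?N}" by auto
  moreover have "v 0 \<notin> v ` {1..?N}"
    using inj_v by (auto dest: inj_onD)
  ultimately have "independent ((\<lambda>x. - v 0 + x) ` v ` {1..?N})"
    using indep affine_dependent_iff_dependent by (metis image_insert)
  moreover have "(\<lambda>x. - v 0 + x) ` v ` {1..?N} = d ` {1..?N}"
    by (auto simp: d_def)
  ultimately have "independent (d ` {1..?N})" by simp
  from linear_independent_extend[OF this, of "\<lambda>w. t (inv_into {1..?N} d w) - t 0"]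
  obtain g :: "real^'n \<Rightarrow> real"
    where "linear g" and g: "\<forall>w\<in>d ` {1..?N}. g w = t (inv_into {1..?N} d w) - t 0"
    by blast
  have "inj_on d {1..?N}"
    using inj_v by (auto simp: d_def inj_on_def)
  then have g_d: "g (d k) = t k - t 0" if "k \<in> {1..?N}" for k
    using g that by (simp add: inv_into_f_f)
  define a where "a = adjoint g 1"
  have a: "a \<bullet> x = g x" for x \<comment> \<open>Riesz representation of the functional g\<close>
    unfolding a_def using adjoint_clauses(2)[OF \<open>linear g\<close>] by simp
  have "a \<bullet> v k + (t 0 - a \<bullet> v 0) = t k" if "k \<le> ?N" for k
  proof (cases "k = 0")
    case False
    with that have "g (d k) = t k - t 0" by (intro g_d) simp
    then show ?thesis by (simp add: a[symmetric] d_def inner_diff_right)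
  qed simp
  then show ?thesis by blast
qed

lemma interp_proj_eqI:
  fixes v :: "nat \<Rightarrow> real^'n"
  assumes "nondeg_simplex v" and "q \<in> Pi1" and "\<forall>j\<le>CARD('n). q (v j) = f (v j)"
  shows "interp_proj v f = q"
  unfolding interp_proj_def
proof (rule the_equality)
  show "q \<in> Pi1 \<and> (\<forall>j\<le>CARD('n). q (v j) = f (v j))" using assms by blast
  fix p assume p: "p \<in> Pi1 \<and> (\<forall>j\<le>CARD('n). p (v j) = f (v j))"
  obtain a b where ab: "\<And>x. p x = a \<bullet> x + b" using p unfolding Pi1_def by blast
  obtain c d where cd: "\<And>x. q x = c \<bullet> x + d" using assms(2) unfolding Pi1_def by blast
  have "p (v k) = q (v k)" if "k \<le> CARD('n)" for k
    using p assms(3) that by simp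
  then have "\<forall>k\<le>CARD('n). (a - c) \<bullet> v k + (b - d) = 0"
    by (simp add: ab cd inner_diff_left algebra_simps)
  then have "a - c = 0" and "b - d = 0"
    using affine_eq_0_on_nondeg_simplex[OF assms(1)] by blast+
  then show "p = q" by (intro ext) (simp add: ab cd)
qed

definition barycentric_coords :: "(nat \<Rightarrow> real^'n) \<Rightarrow> (nat \<Rightarrow> real^'n) \<Rightarrow> (nat \<Rightarrow> real) \<Rightarrow> bool"
  where "barycentric_coords v a b \<longleftrightarrow>
    (\<forall>j\<le>CARD('n). \<forall>k\<le>CARD('n). a j \<bullet> v k + b j = (if k = j then 1 else 0))"

lemma barycentric_coords_exist:
  fixes v :: "nat \<Rightarrow> real^'n"
  assumes "nondeg_simplex v"
  shows "\<exists>a b. barycentric_coords v a b"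
proof -
  have "\<forall>j. \<exists>a b. \<forall>k\<le>CARD('n). a \<bullet> v k + b = (if k = j then 1 else 0)"
    by (intro allI affine_interpolation_on_nondeg_simplex[OF assms])
  then obtain a b
    where "\<And>j k. k \<le> CARD('n) \<Longrightarrow> a j \<bullet> v k + b j = (if k = j then 1 else 0)"
    by metis
  then show ?thesis unfolding barycentric_coords_def by blast
qed

lemma barycentric_coords_sum_eq:
  fixes v :: "nat \<Rightarrow> real^'n"
  assumes "barycentric_coords v a b" and "k \<le> CARD('n)"
  shows "(\<Sum>j\<le>CARD('n). c j * (a j \<bullet> v k + b j)) = c k"
proof -
  have "(\<Sum>j\<le>CARD('n). c j * (a j \<bullet> v k + b j)) = (\<Sum>j\<le>CARD('n). if j = k then c j else 0)"
    using assms unfolding barycentric_coords_def by (intro sum.cong) auto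
  also have "\<dots> = c k" using assms(2) by simp
  finally show ?thesis .
qed

lemma interp_proj_barycentric:
  fixes v :: "nat \<Rightarrow> real^'n"
  assumes "nondeg_simplex v" and "barycentric_coords v a b"
  shows "interp_proj v f = (\<lambda>x. \<Sum>j\<le>CARD('n). f (v j) * (a j \<bullet> x + b j))"
proof (rule interp_proj_eqI[OF assms(1)])
  have "(\<Sum>j\<le>CARD('n). f (v j) * (a j \<bullet> x + b j))
      = (\<Sum>j\<le>CARD('n). f (v j) *\<^sub>R a j) \<bullet> x + (\<Sum>j\<le>CARD('n). f (v j) * b j)" for x
    by (simp add: inner_sum_left distrib_left sum.distrib)
  then show "(\<lambda>x. \<Sum>j\<le>CARD('n). f (v j) * (a j \<bullet> x + b j)) \<in> Pi1"
    unfolding Pi1_def by blast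
  show "\<forall>k\<le>CARD('n). (\<Sum>j\<le>CARD('n). f (v j) * (a j \<bullet> v k + b j)) = f (v k)"
    by (intro allI impI barycentric_coords_sum_eq[OF assms(2)])
qed

lemma barycentric_gradient_norm_ge:
  fixes v :: "nat \<Rightarrow> real^'n"
  assumes "barycentric_coords v a b" and "\<forall>k\<le>CARD('n). v k \<in> cball 0 1" and "j \<le> CARD('n)"
  shows "1/2 \<le> norm (a j)"
proof -
  define m where "m = (if j = 0 then 1 else 0::nat)"
  have "0 < CARD('n)" by simp
  then have m: "m \<le> CARD('n)" "m \<noteq> j"
    by (auto simp: m_def)
  have "a j \<bullet> v j + b j = 1" and "a j \<bullet> v m + b j = 0"
    using assms(1,3) m unfolding barycentric_coords_def by auto
  then have "1 = a j \<bullet> (v j - v m)"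
    by (simp add: inner_diff_right)
  also have "\<dots> \<le> norm (a j) * norm (v j - v m)"
    by (rule norm_cauchy_schwarz)
  also have "\<dots> \<le> norm (a j) * 2"
  proof (rule mult_left_mono)
    have "norm (v j) \<le> 1" and "norm (v m) \<le> 1"
      using assms(2,3) m(1) by auto
    then show "norm (v j - v m) \<le> 2"
      using norm_triangle_ineq4[of "v j" "v m"] by linarith
  qed simp
  finally show ?thesis by simp
qed

lemma abs_interp_proj_le_proj_norm:
  fixes v :: "nat \<Rightarrow> real^'n"
  assumes "nondeg_simplex v" and "\<forall>k\<le>CARD('n). v k \<in> cball 0 1"
    and "continuous_on (cball 0 1) f" and "\<forall>y\<in>cball 0 1. \<bar>f y\<bar> \<le> 1" and "x \<in> cball 0 1"
  shows "\<bar>interp_proj v f x\<bar> \<le> proj_norm v"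
  unfolding proj_norm_def
proof (rule cSup_upper)
  show "\<bar>interp_proj v f x\<bar> \<in> {\<bar>interp_proj v f x\<bar> | f x.
      continuous_on (cball 0 1) f \<and> (\<forall>y\<in>cball 0 1. \<bar>f y\<bar> \<le> 1) \<and> x \<in> cball (0::real^'n) 1}"
    using assms(3-5) by blast
  obtain a b where ab: "barycentric_coords v a b"
    using barycentric_coords_exist[OF assms(1)] by blast
  show "bdd_above {\<bar>interp_proj v f x\<bar> | f x.
      continuous_on (cball 0 1) f \<and> (\<forall>y\<in>cball 0 1. \<bar>f y\<bar> \<le> 1) \<and> x \<in> cball (0::real^'n) 1}"
  proof (rule bdd_aboveI, safe)
    fix g :: "real^'n \<Rightarrow> real" and y :: "real^'n"
    assume g: "\<forall>y\<in>cball 0 1. \<bar>g y\<bar> \<le> 1" and y: "y \<in> cball 0 1"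
    have "\<bar>interp_proj v g y\<bar> \<le> (\<Sum>j\<le>CARD('n). \<bar>g (v j)\<bar> * \<bar>a j \<bullet> y + b j\<bar>)"
      unfolding interp_proj_barycentric[OF assms(1) ab] abs_mult[symmetric] by (rule sum_abs)
    also have "\<dots> \<le> (\<Sum>j\<le>CARD('n). 1 * (norm (a j) + \<bar>b j\<bar>))"
    proof (intro sum_mono mult_mono)
      fix j assume "j \<in> {..CARD('n)}"
      then show "\<bar>g (v j)\<bar> \<le> 1" using g assms(2) by auto
      have "\<bar>a j \<bullet> y\<bar> \<le> norm (a j) * norm y" by (rule Cauchy_Schwarz_ineq2)
      also have "\<dots> \<le> norm (a j)" using y by (simp add: mult_left_le)
      finally show "\<bar>a j \<bullet> y + b j\<bar> \<le> norm (a j) + \<bar>b j\<bar>" by linarith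
    qed auto
    finally show "\<bar>interp_proj v g y\<bar> \<le> (\<Sum>j\<le>CARD('n). norm (a j) + \<bar>b j\<bar>)" by simp
  qed
qed

lemma exists_signs_sum_norm_squared_ge:
  fixes a :: "'i \<Rightarrow> 'a::real_inner"
  assumes "finite I"
  shows "\<exists>s. (\<forall>i. \<bar>s i\<bar> = 1) \<and>
    (\<Sum>i\<in>I. (norm (a i))\<^sup>2) \<le> (norm (\<Sum>i\<in>I. s i *\<^sub>R a i))\<^sup>2"
  using assms
proof (induction I rule: finite_induct)
  case empty
  show ?case by (rule exI[of _ "\<lambda>_. 1"]) simp
next
  case (insert i I)
  then obtain s where s: "\<forall>i. \<bar>s i\<bar> = 1"
    and IH: "(\<Sum>i\<in>I. (norm (a i))\<^sup>2) \<le> (norm (\<Sum>i\<in>I. s i *\<^sub>R a i))\<^sup>2" by blast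
  define S where "S = (\<Sum>i\<in>I. s i *\<^sub>R a i)"
  define \<sigma> :: real where "\<sigma> = (if S \<bullet> a i \<ge> 0 then 1 else -1)"
  let ?s = "s(i := \<sigma>)"
  have "(\<Sum>j\<in>I. ?s j *\<^sub>R a j) = S"
    unfolding S_def using insert.hyps(2) by (intro sum.cong) auto
  then have sum_eq: "(\<Sum>j\<in>insert i I. ?s j *\<^sub>R a j) = \<sigma> *\<^sub>R a i + S"
    using insert.hyps by simp
  have "(\<Sum>j\<in>insert i I. (norm (a j))\<^sup>2) = (norm (a i))\<^sup>2 + (\<Sum>j\<in>I. (norm (a j))\<^sup>2)"
    using insert.hyps by simp
  also have "\<dots> \<le> (norm (a i))\<^sup>2 + (norm S)\<^sup>2"
    using IH by (simp add: S_def)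
  also have "\<dots> \<le> (norm (\<sigma> *\<^sub>R a i + S))\<^sup>2"
  proof -
    have "(norm (\<sigma> *\<^sub>R a i + S))\<^sup>2 = (norm (a i))\<^sup>2 + 2 * (\<sigma> * (S \<bullet> a i)) + (norm S)\<^sup>2"
      by (simp add: power2_norm_eq_inner inner_add_left inner_add_right inner_commute \<sigma>_def)
    moreover have "\<sigma> * (S \<bullet> a i) \<ge> 0" by (simp add: \<sigma>_def)
    ultimately show ?thesis by linarith
  qed
  finally have "(\<Sum>j\<in>insert i I. (norm (a j))\<^sup>2) \<le> (norm (\<Sum>j\<in>insert i I. ?s j *\<^sub>R a j))\<^sup>2"
    unfolding sum_eq .
  moreover have "\<forall>j. \<bar>?s j\<bar> = 1" using s by (simp add: \<sigma>_def)
  ultimately show ?case by blast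
qed

lemma affine_ge_norm_on_unit_ball:
  fixes A :: "'a::real_inner"
  shows "\<exists>x. norm x \<le> 1 \<and> norm A \<le> \<bar>A \<bullet> x + B\<bar>"
proof -
  define x where "x = (if B \<ge> 0 then sgn A else - sgn A)"
  have "A \<bullet> sgn A = norm A"
    by (cases "A = 0") (simp_all add: sgn_div_norm power2_norm_eq_inner[symmetric] power2_eq_square)
  then have "norm A \<le> \<bar>A \<bullet> x + B\<bar>" by (auto simp: x_def abs_if)
  moreover have "norm x \<le> 1" by (simp add: x_def norm_sgn)
  ultimately show ?thesis by blast
qed

lemma abs_barycentric_combination_le_proj_norm:
  fixes v :: "nat \<Rightarrow> real^'n"
  assumes "nondeg_simplex v" and "\<forall>k\<le>CARD('n). v k \<in> cball 0 1"
    and "barycentric_coords v a b" and "\<forall>j. \<bar>c j\<bar> \<le> 1" and "norm x \<le> 1"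
  shows "\<bar>\<Sum>j\<le>CARD('n). c j * (a j \<bullet> x + b j)\<bar> \<le> proj_norm v"
proof -
  define p where "p y = (\<Sum>j\<le>CARD('n). c j * (a j \<bullet> y + b j))" for y
  \<comment> \<open>clipping p to [-1, 1] keeps its values c k at the vertices, hence its interpolant\<close>
  define f where "f y = max (-1) (min 1 (p y))" for y
  have "p (v k) = c k" if "k \<le> CARD('n)" for k
    unfolding p_def using barycentric_coords_sum_eq[OF assms(3) that] .
  then have "f (v k) = c k" if "k \<le> CARD('n)" for k
    using that assms(4) by (auto simp: f_def abs_le_iff)
  then have "interp_proj v f = p"
    unfolding interp_proj_barycentric[OF assms(1,3)] p_def by (intro ext sum.cong) auto
  moreover have "continuous_on (cball 0 1) f"
    unfolding f_def p_def by (intro continuous_intros)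
  moreover have "\<forall>y\<in>cball 0 1. \<bar>f y\<bar> \<le> 1"
    by (auto simp: f_def abs_le_iff)
  ultimately show ?thesis
    using abs_interp_proj_le_proj_norm[OF assms(1,2), of f x] assms(5) by (simp add: p_def)
qed

lemma proj_norm_ge:
  fixes v :: "nat \<Rightarrow> real^'n"
  assumes "nondeg_simplex v" and "\<forall>k\<le>CARD('n). v k \<in> cball 0 1"
  shows "sqrt (real CARD('n) + 1) / 2 \<le> proj_norm v"
proof -
  let ?N = "CARD('n)"
  obtain a b where ab: "barycentric_coords v a b"
    using barycentric_coords_exist[OF assms(1)] by blast
  obtain s where s: "\<forall>j. \<bar>s j\<bar> = 1"
    and s_sum: "(\<Sum>j\<le>?N. (norm (a j))\<^sup>2) \<le> (norm (\<Sum>j\<le>?N. s j *\<^sub>R a j))\<^sup>2"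
    using exists_signs_sum_norm_squared_ge[of "{..?N}" a] by blast
  define A where "A = (\<Sum>j\<le>?N. s j *\<^sub>R a j)"
  obtain x where x: "norm x \<le> 1" and x_max: "norm A \<le> \<bar>A \<bullet> x + (\<Sum>j\<le>?N. s j * b j)\<bar>"
    using affine_ge_norm_on_unit_ball by blast
  have "(real ?N + 1) / 4 = (\<Sum>j\<le>?N. (1/2::real)\<^sup>2)"
    by (simp add: power2_eq_square)
  also have "\<dots> \<le> (\<Sum>j\<le>?N. (norm (a j))\<^sup>2)"
    using barycentric_gradient_norm_ge[OF ab assms(2)] by (intro sum_mono power_mono) auto
  also have "\<dots> \<le> (norm A)\<^sup>2"
    using s_sum by (simp add: A_def)
  finally have "sqrt ((real ?N + 1) / 4) \<le> norm A"
    by (simp add: real_le_lsqrt)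
  then have "sqrt (real ?N + 1) / 2 \<le> norm A"
    by (simp add: real_sqrt_divide)
  also have "norm A \<le> \<bar>A \<bullet> x + (\<Sum>j\<le>?N. s j * b j)\<bar>"
    by (rule x_max)
  also have "A \<bullet> x + (\<Sum>j\<le>?N. s j * b j) = (\<Sum>j\<le>?N. s j * (a j \<bullet> x + b j))"
    by (simp add: A_def inner_sum_left distrib_left sum.distrib)
  also have "\<bar>\<dots>\<bar> \<le> proj_norm v"
    using s x by (intro abs_barycentric_combination_le_proj_norm[OF assms ab]) auto
  finally show ?thesis .
qed

lemma exists_nondeg_simplex_in_unit_ball:
  "\<exists>v :: nat \<Rightarrow> real^'n. nondeg_simplex v \<and> (\<forall>k\<le>CARD('n). v k \<in> cball 0 1)"
proof -
  let ?V = "insert 0 (Basis :: (real^'n) set)"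
  have "0 \<notin> (Basis :: (real^'n) set)" by (simp add: nonzero_Basis)
  then have card_V: "card ?V = Suc CARD('n)" by simp
  obtain v where "bij_betw v {0..<card ?V} ?V"
    using ex_bij_betw_nat_finite[of ?V] by auto
  then have v: "bij_betw v {0..CARD('n)} ?V"
    unfolding card_V atLeastLessThanSuc_atLeastAtMost .
  have "\<not> affine_dependent ?V"
    using \<open>0 \<notin> Basis\<close> by (simp add: affine_dependent_iff_dependent independent_Basis)
  then have "nondeg_simplex v"
    using v unfolding nondeg_simplex_def bij_betw_def by simp
  moreover have "v k \<in> cball 0 1" if "k \<le> CARD('n)" for k
    using bij_betwE[OF v] that by (force simp: norm_Basis)
  ultimately show ?thesis by blast
qed

lemma theta_ge: "sqrt (real CARD('n) + 1) / 2 \<le> theta TYPE('n::finite)"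
  unfolding theta_def
proof (rule cInf_greatest)
  show "{proj_norm v | v :: nat \<Rightarrow> real^'n. nondeg_simplex v \<and> (\<forall>j\<le>CARD('n). v j \<in> cball 0 1)} \<noteq> {}"
    using exists_nondeg_simplex_in_unit_ball by blast
qed (use proj_norm_ge in blast)

lemma constant_pos_le_half:
  "0 < root 3 pi / (sqrt (12 * exp 1) * root 6 3)"
  "root 3 pi / (sqrt (12 * exp 1) * root 6 3) \<le> 1/2"
proof -
  have "root 3 pi \<le> root 3 8"
    using pi_less_4 by (intro real_root_le_mono) auto
  also have "root 3 (8::real) = 2"
    by (rule real_root_pos_unique) auto
  finally have pi: "root 3 pi \<le> 2" .
  have "4 \<le> sqrt (12 * exp (1::real))"
    using exp_ge_add_one_self[of 1] by (intro real_le_rsqrt) auto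
  moreover have "1 \<le> root 6 (3::real)"
    using real_root_le_mono[of 6 1 3] by simp
  ultimately have "4 \<le> sqrt (12 * exp 1) * root 6 3"
    using mult_mono[of 4 "sqrt (12 * exp 1)" 1 "root 6 3"] by simp
  then show "0 < root 3 pi / (sqrt (12 * exp 1) * root 6 3)"
    and "root 3 pi / (sqrt (12 * exp 1) * root 6 3) \<le> 1/2"
    using pi by (auto simp: divide_simps)
qed

theorem theorem2:
  "root 3 pi / (sqrt (12 * exp 1) * root 6 3) > 0 \<and>
   theta TYPE('n::finite) > root 3 pi / (sqrt (12 * exp 1) * root 6 3) * sqrt (real CARD('n))"
proof
  let ?c = "root 3 pi / (sqrt (12 * exp 1) * root 6 3)"
  show "?c > 0" by (rule constant_pos_le_half(1))
  have "?c * sqrt (real CARD('n)) \<le> 1/2 * sqrt (real CARD('n))"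
    using constant_pos_le_half(2) by (rule mult_right_mono) simp
  also have "\<dots> < sqrt (real CARD('n) + 1) / 2"
    by simp
  also have "\<dots> \<le> theta TYPE('n)"
    by (rule theta_ge)
  finally show "?c * sqrt (real CARD('n)) < theta TYPE('n)" .
qed

end
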